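(* Let $(L,\alpha_L)$ be a perfect Hom-Leibniz $n$-algebra with $\alpha_L$ injective such that both $(L,\alpha_L)$ and $(\mathfrak{uce}(L),\alpha_{\mathfrak{uce}(L)})$ satisfy condition (C). Then there is an isomorphism (induced by $u_L$) $$\frac{\alpha_L(L)}{Z(\alpha_L(L))}\cong\frac{\alpha_{\mathfrak{uce}(L)}(\mathfrak{uce}(L))}{Z(\alpha_{\mathfrak{uce}(L)}(\mathfrak{uce}(L)))}.$$
   Context: Fix a field $\mathbb K$ and $n\ge2$. A (multiplicative) Hom-Leibniz $n$-algebra is a $\mathbb K$-vector space $L$ with an $n$-linear bracket and a linear map $\alpha_L$ preserving the bracket, satisfying $[[x_1,\dots,x_n],\alpha_L(y_1),\dots,\alpha_L(y_{n-1})]=\sum_{i=1}^n[\alpha_L(x_1),\dots,[x_i,y_1,\dots,y_{n-1}],\dots,\alpha_L(x_n)]$. Perfect: $L=[L,\dots,L]$. For a subspace $S$ closed under the bracket, $Z(S)$ is the set of $x\in S$ such that every bracket with $x$ in some position and all other entries in $S$ is $0$. Condition (C) for $(K,\alpha_K)$: $[\alpha_K(k),\alpha_K(k),\alpha_K(k_3),\dots,\alpha_K(k_n)]=0$ for all $k,k_3,\dots,k_n\in K$. Define $\delta_2:L^{\otimes(2n-1)}\to L^{\otimes n}$, $\delta_2(x_1\otimes\dots\otimes x_n\otimes y_1\otimes\dots\otimes y_{n-1})=[x_1,\dots,x_n]\otimes\alpha_L(y_1)\otimes\dots\otimes\alpha_L(y_{n-1})-\sum_{i=1}^n\alpha_L(x_1)\otimes\dots\otimes[x_i,y_1,\dots,y_{n-1}]\otimes\dots\otimes\alpha_L(x_n)$.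 $\mathfrak{uce}(L)=L^{\otimes n}/\operatorname{im}\delta_2$, classes written $\{x_1,\dots,x_n\}$, with bracket $[\{x_{1,1},\dots,x_{n,1}\},\dots,\{x_{1,n},\dots,x_{n,n}\}]=\{[x_{1,1},\dots,x_{n,1}],\dots,[x_{1,n},\dots,x_{n,n}]\}$ and $\alpha_{\mathfrak{uce}(L)}\{x_1,\dots,x_n\}=\{\alpha_L(x_1),\dots,\alpha_L(x_n)\}$; $u_L:\mathfrak{uce}(L)\to L$, $u_L\{x_1,\dots,x_n\}=[x_1,\dots,x_n]$, is the universal central extension of the perfect $L$. *)

theory Defs
  imports Complex_Main
begin

text \<open>An n-linear bracket is modelled as a map on lists, meaningful on lists of length n.\<close>

definition nlinear :: "nat \<Rightarrow> ('k::field \<Rightarrow> 'v::ab_group_add \<Rightarrow> 'v) \<Rightarrow> ('v list \<Rightarrow> 'v) \<Rightarrow> bool" where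
  "nlinear n scale br \<longleftrightarrow>
     (\<forall>xs i a b. length xs = n \<and> i < n \<longrightarrow> br (xs[i := a + b]) = br (xs[i := a]) + br (xs[i := b])) \<and>
     (\<forall>xs i c a. length xs = n \<and> i < n \<longrightarrow> br (xs[i := scale c a]) = scale c (br (xs[i := a])))"

definition hom_leibniz_nalg ::
  "nat \<Rightarrow> ('k::field \<Rightarrow> 'v::ab_group_add \<Rightarrow> 'v) \<Rightarrow> ('v list \<Rightarrow> 'v) \<Rightarrow> ('v \<Rightarrow> 'v) \<Rightarrow> bool" where
  "hom_leibniz_nalg n scale br \<alpha> \<longleftrightarrow>
     2 \<le> n \<and> vector_space scale \<and> nlinear n scale br \<and> Vector_Spaces.linear scale scale \<alpha> \<and>
     \<comment> \<open>multiplicative\<close>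
     (\<forall>xs. length xs = n \<longrightarrow> \<alpha> (br xs) = br (map \<alpha> xs)) \<and>
     \<comment> \<open>Hom-Leibniz identity\<close>
     (\<forall>xs ys. length xs = n \<and> length ys = n - 1 \<longrightarrow>
        br (br xs # map \<alpha> ys) = (\<Sum>i<n. br ((map \<alpha> xs)[i := br (xs ! i # ys)])))"

definition perfect :: "nat \<Rightarrow> ('k::field \<Rightarrow> 'v::ab_group_add \<Rightarrow> 'v) \<Rightarrow> ('v list \<Rightarrow> 'v) \<Rightarrow> bool" where
  "perfect n scale br \<longleftrightarrow> module.span scale {br xs | xs. length xs = n} = UNIV"

definition centre :: "nat \<Rightarrow> 'a set \<Rightarrow> ('a list \<Rightarrow> 'a) \<Rightarrow> 'a \<Rightarrow> 'a set" where
  "centre n S br z = {x \<in> S. \<forall>ys i. set ys \<subseteq> S \<and> length ys = n - 1 \<and> i \<le> n - 1 \<longrightarrow>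
                          br (take i ys @ x # drop i ys) = z}"

definition condC :: "nat \<Rightarrow> 'a set \<Rightarrow> ('a list \<Rightarrow> 'a) \<Rightarrow> ('a \<Rightarrow> 'a) \<Rightarrow> 'a \<Rightarrow> bool" where
  "condC n S br \<alpha> z \<longleftrightarrow> (\<forall>k ks. k \<in> S \<and> set ks \<subseteq> S \<and> length ks = n - 2 \<longrightarrow>
                          br (\<alpha> k # \<alpha> k # map \<alpha> ks) = z)"

definition cls :: "('a \<Rightarrow> 'a \<Rightarrow> 'a) \<Rightarrow> 'a set \<Rightarrow> 'a \<Rightarrow> 'a set" where
  "cls add Z x = {add x z | z. z \<in> Z}"

definition quot :: "('a \<Rightarrow> 'a \<Rightarrow> 'a) \<Rightarrow> 'a set \<Rightarrow> 'a set \<Rightarrow> 'a set set" where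
  "quot add A Z = cls add Z ` A"

text \<open>L^{\<otimes>n} is realised as the free K-vector space on n-tuples (finitely supported
  functions 'v list \<Rightarrow> 'k supported on lists of length n) modulo multilinearity relations;
  uce(L) is its quotient by im \<delta>2, i.e. the free space modulo the subspace rels generated by
  multilinearity relations and the \<delta>2-relations.\<close>

definition tens :: "'v list \<Rightarrow> 'v list \<Rightarrow> 'k::field" where
  "tens xs = (\<lambda>ys. if ys = xs then 1 else 0)"

definition freesp :: "nat \<Rightarrow> ('v list \<Rightarrow> 'k::field) set" where
  "freesp n = {f. finite {xs. f xs \<noteq> 0} \<and> (\<forall>xs. f xs \<noteq> 0 \<longrightarrow> length xs = n)}"

inductive_set rels :: "nat \<Rightarrow> ('k::field \<Rightarrow> 'v::ab_group_add \<Rightarrow> 'v) \<Rightarrow> ('v list \<Rightarrow> 'v) \<Rightarrow> ('v \<Rightarrow> 'v)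
    \<Rightarrow> ('v list \<Rightarrow> 'k) set"
  for n scale br \<alpha> where
  add_rel: "length xs = n \<Longrightarrow> i < n \<Longrightarrow>
     (\<lambda>ys. tens (xs[i := a + b]) ys - tens (xs[i := a]) ys - tens (xs[i := b]) ys) \<in> rels n scale br \<alpha>"
| smul_rel: "length xs = n \<Longrightarrow> i < n \<Longrightarrow>
     (\<lambda>ys. tens (xs[i := scale c a]) ys - c * tens (xs[i := a]) ys) \<in> rels n scale br \<alpha>"
| delta2_rel: "length xs = n \<Longrightarrow> length zs = n - 1 \<Longrightarrow>
     (\<lambda>ys. tens (br xs # map \<alpha> zs) ys - (\<Sum>i<n. tens ((map \<alpha> xs)[i := br (xs ! i # zs)]) ys))
       \<in> rels n scale br \<alpha>"
| zero_rel: "(\<lambda>ys. 0) \<in> rels n scale br \<alpha>"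
| plus_rel: "r \<in> rels n scale br \<alpha> \<Longrightarrow> s \<in> rels n scale br \<alpha> \<Longrightarrow> (\<lambda>ys. r ys + s ys) \<in> rels n scale br \<alpha>"
| scal_rel: "r \<in> rels n scale br \<alpha> \<Longrightarrow> (\<lambda>ys. c * r ys) \<in> rels n scale br \<alpha>"

text \<open>Coset f + im \<delta>2 (the class written \{x1,...,xn\} when f = tens [x1,...,xn]).\<close>
definition ucls :: "nat \<Rightarrow> ('k::field \<Rightarrow> 'v::ab_group_add \<Rightarrow> 'v) \<Rightarrow> ('v list \<Rightarrow> 'v) \<Rightarrow> ('v \<Rightarrow> 'v)
    \<Rightarrow> ('v list \<Rightarrow> 'k) \<Rightarrow> ('v list \<Rightarrow> 'k) set" where
  "ucls n scale br \<alpha> f = {(\<lambda>ys. f ys + r ys) | r. r \<in> rels n scale br \<alpha>}"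

definition uce :: "nat \<Rightarrow> ('k::field \<Rightarrow> 'v::ab_group_add \<Rightarrow> 'v) \<Rightarrow> ('v list \<Rightarrow> 'v) \<Rightarrow> ('v \<Rightarrow> 'v)
    \<Rightarrow> ('v list \<Rightarrow> 'k) set set" where
  "uce n scale br \<alpha> = ucls n scale br \<alpha> ` freesp n"

text \<open>Addition and zero of uce(L) (sum of cosets; zero = im \<delta>2).\<close>
definition uce_add :: "('v list \<Rightarrow> 'k::field) set \<Rightarrow> ('v list \<Rightarrow> 'k) set \<Rightarrow> ('v list \<Rightarrow> 'k) set" where
  "uce_add C D = {(\<lambda>ys. c ys + d ys) | c d. c \<in> C \<and> d \<in> D}"

definition uce_smul :: "nat \<Rightarrow> ('k::field \<Rightarrow> 'v::ab_group_add \<Rightarrow> 'v) \<Rightarrow> ('v list \<Rightarrow> 'v) \<Rightarrow> ('v \<Rightarrow> 'v)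
    \<Rightarrow> 'k \<Rightarrow> ('v list \<Rightarrow> 'k) set \<Rightarrow> ('v list \<Rightarrow> 'k) set" where
  "uce_smul n scale br \<alpha> c C = {(\<lambda>ys. c * f ys + r ys) | f r. f \<in> C \<and> r \<in> rels n scale br \<alpha>}"

definition uF :: "('k::field \<Rightarrow> 'v::ab_group_add \<Rightarrow> 'v) \<Rightarrow> ('v list \<Rightarrow> 'v) \<Rightarrow> ('v list \<Rightarrow> 'k) \<Rightarrow> 'v" where
  "uF scale br f = (\<Sum>xs | f xs \<noteq> 0. scale (f xs) (br xs))"

text \<open>u_L : uce(L) \<rightarrow> L, u_L\{x1,...,xn\} = [x1,...,xn] (evaluated on a representative).\<close>
definition uL :: "('k::field \<Rightarrow> 'v::ab_group_add \<Rightarrow> 'v) \<Rightarrow> ('v list \<Rightarrow> 'v) \<Rightarrow> ('v list \<Rightarrow> 'k) set \<Rightarrow> 'v" where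
  "uL scale br C = uF scale br (SOME f. f \<in> C)"

definition alphaF :: "('v \<Rightarrow> 'v) \<Rightarrow> ('v list \<Rightarrow> 'k::field) \<Rightarrow> ('v list \<Rightarrow> 'k)" where
  "alphaF \<alpha> f = (\<lambda>ys. \<Sum>xs | f xs \<noteq> 0 \<and> map \<alpha> xs = ys. f xs)"

definition alpha_uce :: "nat \<Rightarrow> ('k::field \<Rightarrow> 'v::ab_group_add \<Rightarrow> 'v) \<Rightarrow> ('v list \<Rightarrow> 'v) \<Rightarrow> ('v \<Rightarrow> 'v)
    \<Rightarrow> ('v list \<Rightarrow> 'k) set \<Rightarrow> ('v list \<Rightarrow> 'k) set" where
  "alpha_uce n scale br \<alpha> C = {(\<lambda>ys. alphaF \<alpha> f ys + r ys) | f r. f \<in> C \<and> r \<in> rels n scale br \<alpha>}"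

text \<open>Bracket of uce(L): [\{x_{1,1},...,x_{n,1}\},...,\{x_{1,n},...,x_{n,n}\}]
  = \{[x_{1,1},...,x_{n,1}],...,[x_{1,n},...,x_{n,n}]\}, i.e. (extended multilinearly)
  [C1,...,Cn] = \{u_L C1,...,u_L Cn\}.\<close>
definition br_uce :: "nat \<Rightarrow> ('k::field \<Rightarrow> 'v::ab_group_add \<Rightarrow> 'v) \<Rightarrow> ('v list \<Rightarrow> 'v) \<Rightarrow> ('v \<Rightarrow> 'v)
    \<Rightarrow> ('v list \<Rightarrow> 'k) set list \<Rightarrow> ('v list \<Rightarrow> 'k) set" where
  "br_uce n scale br \<alpha> Cs = ucls n scale br \<alpha> (tens (map (uL scale br) Cs))"

end

theory Submission
  imports Defs
begin

text \<open>
  Everything happens inside \<open>\<alpha>(uce(L))\<close>, which \<open>u_L\<close> maps additively onto \<open>\<alpha>(L)\<close>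
  because \<open>L\<close> is perfect and \<open>\<alpha>\<close> is multiplicative. The heart of the proof is that an element
  \<open>w\<close> of \<open>\<alpha>(uce(L))\<close> is central if and only if \<open>u_L w\<close> is central in \<open>\<alpha>(L)\<close>; then two
  cosets modulo the centres agree on one side exactly when their images agree on the other.
  The non-trivial direction says that a class \<open>{a\<^sub>1,\<dots>,a\<^sub>n}\<close> with entries in \<open>\<alpha>(L)\<close>, one of
  them central, vanishes. If the central entry is not the first one, write the first entry as a
  combination of brackets (perfectness) and rewrite with the \<open>\<delta>\<^sub>2\<close>-relation: every bracket
  \<open>[x\<^sub>i, z\<^sub>1, \<dots>]\<close> on the right vanishes, since \<open>\<alpha>\<close> maps it to a bracket with a central entry
  and \<open>\<alpha>\<close> is injective. Condition (C) for \<open>uce(L)\<close> makes the classes alternating in the first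
  two entries, which moves a central first entry to the second place.
\<close>

lemma freesp_finite_support: "f \<in> freesp n \<Longrightarrow> finite {xs. f xs \<noteq> 0}"
  unfolding freesp_def by simp

lemma freesp_lincomb:
  assumes "f \<in> freesp n" "g \<in> freesp n"
  shows "(\<lambda>y. a * f y + b * g y) \<in> freesp n"
proof -
  have "{y. a * f y + b * g y \<noteq> 0} \<subseteq> {y. f y \<noteq> 0} \<union> {y. g y \<noteq> 0}" by auto
  with assms show ?thesis
    unfolding freesp_def by (auto intro: finite_subset)
qed

lemma freesp_add: "f \<in> freesp n \<Longrightarrow> g \<in> freesp n \<Longrightarrow> (\<lambda>y. f y + g y) \<in> freesp n"
  using freesp_lincomb[of f n g 1 1] by simp

lemma freesp_scale: "f \<in> freesp n \<Longrightarrow> (\<lambda>y. c * f y) \<in> freesp n"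
  using freesp_lincomb[of f n f c 0] by simp

lemma freesp_diff: "f \<in> freesp n \<Longrightarrow> g \<in> freesp n \<Longrightarrow> (\<lambda>y. f y - g y) \<in> freesp n"
  using freesp_lincomb[of f n g 1 "-1"] by simp

lemma freesp_zero: "(\<lambda>y. 0) \<in> freesp n"
  unfolding freesp_def by simp

lemma freesp_sum:
  "finite I \<Longrightarrow> (\<And>i. i \<in> I \<Longrightarrow> f i \<in> freesp n) \<Longrightarrow> (\<lambda>y. \<Sum>i\<in>I. f i y) \<in> freesp n"
  by (induction I rule: finite_induct) (simp_all add: freesp_zero freesp_add)

lemma freesp_tens: "length xs = n \<Longrightarrow> tens xs \<in> freesp n"
  unfolding freesp_def tens_def by (auto intro: finite_subset[of _ "{xs}"])

lemma ex_list_map_eq: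
  assumes "\<And>a. a \<in> A \<Longrightarrow> \<exists>k\<in>K. g k = a" and "set as \<subseteq> A"
  shows "\<exists>ks. set ks \<subseteq> K \<and> map g ks = as"
  using assms(2)
proof (induction as)
  case (Cons a as)
  then obtain ks where "set ks \<subseteq> K" "map g ks = as" by auto
  moreover obtain k where "k \<in> K" "g k = a" using assms(1) Cons.prems by auto
  ultimately show ?case by (intro exI[of _ "k # ks"]) auto
qed simp

lemma list_update_insert_at:
  "i \<le> length ys \<Longrightarrow> (take i ys @ u # drop i ys)[i := v] = take i ys @ v # drop i ys"
  by (simp add: list_update_append)

lemma cls_plus_eq_iff:
  fixes Z :: "'a::ab_group_add set"
  assumes zero: "0 \<in> Z" and add: "\<And>x y. x \<in> Z \<Longrightarrow> y \<in> Z \<Longrightarrow> x + y \<in> Z"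
    and neg: "\<And>x. x \<in> Z \<Longrightarrow> - x \<in> Z"
  shows "cls (+) Z a = cls (+) Z b \<longleftrightarrow> a - b \<in> Z"
proof
  assume "cls (+) Z a = cls (+) Z b"
  moreover have "a \<in> cls (+) Z a" unfolding cls_def using zero by (intro CollectI exI[of _ 0]) simp
  ultimately obtain z where "z \<in> Z" "a = b + z" unfolding cls_def by auto
  then show "a - b \<in> Z" by simp
next
  have subset: "cls (+) Z a \<subseteq> cls (+) Z b" if d: "a - b \<in> Z" for a b
  proof
    fix x assume "x \<in> cls (+) Z a"
    then obtain z where "z \<in> Z" "x = a + z" unfolding cls_def by auto
    with add[OF d] have "(a - b) + z \<in> Z" "x = b + ((a - b) + z)" by auto
    then show "x \<in> cls (+) Z b" unfolding cls_def by blast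
  qed
  assume "a - b \<in> Z"
  with neg[of "a - b"] show "cls (+) Z a = cls (+) Z b"
    using subset[of a b] subset[of b a] by auto
qed

lemma bij_betw_classes:
  assumes img: "h ` S = T"
    and eqv: "\<And>x y. x \<in> S \<Longrightarrow> y \<in> S \<Longrightarrow> f x = f y \<longleftrightarrow> g (h x) = g (h y)"
  shows "\<exists>\<phi>. bij_betw \<phi> (f ` S) (g ` T) \<and> (\<forall>x\<in>S. \<phi> (f x) = g (h x))"
proof -
  define \<phi> where "\<phi> X = g (h (SOME x. x \<in> S \<and> f x = X))" for X
  have \<phi>: "\<phi> (f x) = g (h x)" if "x \<in> S" for x
  proof -
    have "\<exists>y. y \<in> S \<and> f y = f x" using that by auto
    then have "(SOME y. y \<in> S \<and> f y = f x) \<in> S \<and> f (SOME y. y \<in> S \<and> f y = f x) = f x"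
      by (rule someI_ex)
    then show ?thesis unfolding \<phi>_def using eqv that by blast
  qed
  have "inj_on \<phi> (f ` S)"
    by (rule inj_onI) (auto simp: \<phi> eqv)
  moreover have "\<phi> ` f ` S = g ` T"
    using \<phi> img by (auto simp: image_comp)
  ultimately show ?thesis using \<phi> unfolding bij_betw_def by blast
qed

locale hom_leibniz =
  fixes n :: nat and scale :: "'k::field \<Rightarrow> 'v::ab_group_add \<Rightarrow> 'v"
    and br :: "'v list \<Rightarrow> 'v" and \<alpha> :: "'v \<Rightarrow> 'v"
  assumes hom_leibniz: "hom_leibniz_nalg n scale br \<alpha>"
begin

sublocale V: vector_space scale
  using hom_leibniz unfolding hom_leibniz_nalg_def by simp

sublocale A: Vector_Spaces.linear scale scale \<alpha>
  using hom_leibniz unfolding hom_leibniz_nalg_def by simp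

lemma two_le_n: "2 \<le> n"
  using hom_leibniz unfolding hom_leibniz_nalg_def by simp

lemma br_add_entry:
  "length xs = n \<Longrightarrow> i < n \<Longrightarrow> br (xs[i := a + b]) = br (xs[i := a]) + br (xs[i := b])"
  using hom_leibniz unfolding hom_leibniz_nalg_def nlinear_def by blast

lemma br_scale_entry:
  "length xs = n \<Longrightarrow> i < n \<Longrightarrow> br (xs[i := scale c a]) = scale c (br (xs[i := a]))"
  using hom_leibniz unfolding hom_leibniz_nalg_def nlinear_def by blast

lemma br_zero_entry: "length xs = n \<Longrightarrow> i < n \<Longrightarrow> br (xs[i := 0]) = 0"
  using br_add_entry[of xs i 0 0] by simp

lemma alpha_br: "length xs = n \<Longrightarrow> \<alpha> (br xs) = br (map \<alpha> xs)"
  using hom_leibniz unfolding hom_leibniz_nalg_def by blast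

lemma hom_leibniz_identity:
  "length xs = n \<Longrightarrow> length ys = n - 1 \<Longrightarrow>
     br (br xs # map \<alpha> ys) = (\<Sum>i<n. br ((map \<alpha> xs)[i := br (xs ! i # ys)]))"
  using hom_leibniz unfolding hom_leibniz_nalg_def by blast

abbreviation Rel where "Rel \<equiv> rels n scale br \<alpha>"
abbreviation cl where "cl \<equiv> ucls n scale br \<alpha>"

lemma rels_subset_freesp: "r \<in> Rel \<Longrightarrow> r \<in> freesp n"
  by (induction rule: rels.induct)
    (use two_le_n in \<open>auto intro!: freesp_diff freesp_tens freesp_scale freesp_sum freesp_zero freesp_add\<close>)

lemma rels_cong: "r \<in> Rel \<Longrightarrow> (\<And>y. s y = r y) \<Longrightarrow> s \<in> Rel"
proof -
  assume "r \<in> Rel" "\<And>y. s y = r y"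
  then show ?thesis by (metis ext)
qed

lemma rels_neg: "r \<in> Rel \<Longrightarrow> (\<lambda>y. - r y) \<in> Rel"
  using scal_rel[of r n scale br \<alpha> "-1"] by simp

lemma rels_diff: "r \<in> Rel \<Longrightarrow> s \<in> Rel \<Longrightarrow> (\<lambda>y. r y - s y) \<in> Rel"
  using plus_rel[OF _ rels_neg[of s]] by simp

lemma rels_sum: "finite I \<Longrightarrow> (\<And>i. i \<in> I \<Longrightarrow> f i \<in> Rel) \<Longrightarrow> (\<lambda>y. \<Sum>i\<in>I. f i y) \<in> Rel"
proof (induction I rule: finite_induct)
  case (insert x F)
  then show ?case using plus_rel[of "f x" n scale br \<alpha> "\<lambda>y. \<Sum>i\<in>F. f i y"] by simp
qed (simp add: zero_rel)

lemma tens_add_entry_rels: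
  assumes l: "length l = n" "j < n"
  shows "(\<lambda>y. tens (l[j := a + b]) y - (tens (l[j := a]) y + tens (l[j := b]) y)) \<in> Rel"
  using add_rel[OF l, of a b] by (rule rels_cong) simp

lemma subspace_tens_entry_rels:
  assumes l: "length l = n" "j < n"
  shows "V.subspace {a. tens (l[j := a]) \<in> Rel}"
  unfolding V.subspace_def
proof (intro conjI ballI allI)
  from rels_neg[OF add_rel[OF l, of 0 0]]
  show "0 \<in> {a. tens (l[j := a]) \<in> Rel}" by simp
next
  fix a b assume "a \<in> {a. tens (l[j := a]) \<in> Rel}" "b \<in> {a. tens (l[j := a]) \<in> Rel}"
  then have "tens (l[j := a]) \<in> Rel" "tens (l[j := b]) \<in> Rel" by simp_all
  from plus_rel[OF plus_rel[OF add_rel[OF l, of a b] this(1)] this(2)]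
  have "tens (l[j := a + b]) \<in> Rel" by (rule rels_cong) simp
  then show "a + b \<in> {a. tens (l[j := a]) \<in> Rel}" by simp
next
  fix c a assume "a \<in> {a. tens (l[j := a]) \<in> Rel}"
  from plus_rel[OF smul_rel[OF l, where c = c and a = a] scal_rel[OF this[simplified], of c]]
  have "tens (l[j := scale c a]) \<in> Rel" by (rule rels_cong) simp
  then show "scale c a \<in> {a. tens (l[j := a]) \<in> Rel}" by simp
qed

lemma tens_zero_entry_rels: "length l = n \<Longrightarrow> j < n \<Longrightarrow> tens (l[j := 0]) \<in> Rel"
  using V.subspace_0[OF subspace_tens_entry_rels] by simp

lemma uF_eq_sum:
  "finite S \<Longrightarrow> {xs. f xs \<noteq> 0} \<subseteq> S \<Longrightarrow> uF scale br f = (\<Sum>xs\<in>S. scale (f xs) (br xs))"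
  unfolding uF_def by (rule sum.mono_neutral_left) auto

lemma uF_lincomb:
  assumes "f \<in> freesp n" "g \<in> freesp n"
  shows "uF scale br (\<lambda>y. a * f y + b * g y) = scale a (uF scale br f) + scale b (uF scale br g)"
proof -
  let ?S = "{x. f x \<noteq> 0} \<union> {x. g x \<noteq> 0}"
  have fin: "finite ?S" using assms by (simp add: freesp_finite_support)
  have "uF scale br (\<lambda>y. a * f y + b * g y) = (\<Sum>xs\<in>?S. scale (a * f xs + b * g xs) (br xs))"
    by (rule uF_eq_sum[OF fin]) auto
  also have "\<dots> = scale a (\<Sum>xs\<in>?S. scale (f xs) (br xs)) + scale b (\<Sum>xs\<in>?S. scale (g xs) (br xs))"
    by (simp add: V.scale_left_distrib sum.distrib V.scale_sum_right)
  also have "\<dots> = scale a (uF scale br f) + scale b (uF scale br g)"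
    using uF_eq_sum[OF fin, of f] uF_eq_sum[OF fin, of g] by auto
  finally show ?thesis .
qed

lemma uF_add:
  "f \<in> freesp n \<Longrightarrow> g \<in> freesp n \<Longrightarrow> uF scale br (\<lambda>y. f y + g y) = uF scale br f + uF scale br g"
  using uF_lincomb[of f g 1 1] by simp

lemma uF_scale: "f \<in> freesp n \<Longrightarrow> uF scale br (\<lambda>y. c * f y) = scale c (uF scale br f)"
  using uF_lincomb[of f f c 0] by simp

lemma uF_diff:
  "f \<in> freesp n \<Longrightarrow> g \<in> freesp n \<Longrightarrow> uF scale br (\<lambda>y. f y - g y) = uF scale br f - uF scale br g"
  using uF_lincomb[of f g 1 "-1"] by simp

lemma uF_zero: "uF scale br (\<lambda>y. 0) = 0"
  unfolding uF_def by simp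

lemma uF_tens: "uF scale br (tens xs) = br xs"
  using uF_eq_sum[of "{xs}" "tens xs"] by (auto simp: tens_def)

lemma uF_sum:
  "finite I \<Longrightarrow> (\<And>i. i \<in> I \<Longrightarrow> f i \<in> freesp n) \<Longrightarrow>
     uF scale br (\<lambda>y. \<Sum>i\<in>I. f i y) = (\<Sum>i\<in>I. uF scale br (f i))"
proof (induction I rule: finite_induct)
  case (insert x F)
  then show ?case using uF_add[of "f x" "\<lambda>y. \<Sum>i\<in>F. f i y"] freesp_sum[of F f] by simp
qed (simp add: uF_zero)

lemma uF_rels: "r \<in> Rel \<Longrightarrow> uF scale br r = 0"
proof (induction rule: rels.induct)
  case (add_rel xs i a b)
  then show ?case
    using br_add_entry[of xs i a b] by (simp add: uF_diff freesp_diff freesp_tens uF_tens)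
next
  case (smul_rel xs i c a)
  then show ?case
    using br_scale_entry[of xs i c a] by (simp add: uF_diff freesp_scale freesp_tens uF_tens uF_scale)
next
  case (delta2_rel xs zs)
  then show ?case
    using hom_leibniz_identity[of xs zs] two_le_n
    by (simp add: uF_diff freesp_sum freesp_tens uF_tens uF_sum)
qed (simp_all add: uF_zero uF_add uF_scale rels_subset_freesp)

lemma alphaF_eq_sum:
  "finite S \<Longrightarrow> {xs. f xs \<noteq> 0} \<subseteq> S \<Longrightarrow> alphaF \<alpha> f ys = (\<Sum>xs\<in>{xs\<in>S. map \<alpha> xs = ys}. f xs)"
  unfolding alphaF_def by (rule sum.mono_neutral_left) auto

lemma alphaF_nonzeroD: "alphaF \<alpha> f ys \<noteq> 0 \<Longrightarrow> \<exists>xs. f xs \<noteq> 0 \<and> map \<alpha> xs = ys"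
proof (rule ccontr)
  assume "\<not> (\<exists>xs. f xs \<noteq> 0 \<and> map \<alpha> xs = ys)"
  then have "{xs. f xs \<noteq> 0 \<and> map \<alpha> xs = ys} = {}" by auto
  then have "alphaF \<alpha> f ys = 0" unfolding alphaF_def by (simp only: sum.empty)
  moreover assume "alphaF \<alpha> f ys \<noteq> 0"
  ultimately show False by contradiction
qed

lemma freesp_alphaF: "f \<in> freesp n \<Longrightarrow> alphaF \<alpha> f \<in> freesp n"
  unfolding freesp_def
  by (auto dest!: alphaF_nonzeroD intro: finite_subset[of _ "map \<alpha> ` {x. f x \<noteq> 0}"])

lemma alphaF_lincomb:
  assumes "f \<in> freesp n" "g \<in> freesp n"
  shows "alphaF \<alpha> (\<lambda>y. a * f y + b * g y) = (\<lambda>ys. a * alphaF \<alpha> f ys + b * alphaF \<alpha> g ys)"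
proof
  fix ys
  let ?S = "{x. f x \<noteq> 0} \<union> {x. g x \<noteq> 0}"
  let ?T = "{xs\<in>?S. map \<alpha> xs = ys}"
  have fin: "finite ?S" using assms by (simp add: freesp_finite_support)
  have "alphaF \<alpha> (\<lambda>y. a * f y + b * g y) ys = (\<Sum>xs\<in>?T. a * f xs + b * g xs)"
    by (rule alphaF_eq_sum[OF fin]) auto
  also have "\<dots> = a * (\<Sum>xs\<in>?T. f xs) + b * (\<Sum>xs\<in>?T. g xs)"
    by (simp add: sum.distrib sum_distrib_left)
  also have "\<dots> = a * alphaF \<alpha> f ys + b * alphaF \<alpha> g ys"
    using alphaF_eq_sum[OF fin, of f] alphaF_eq_sum[OF fin, of g] by auto
  finally show "alphaF \<alpha> (\<lambda>y. a * f y + b * g y) ys = a * alphaF \<alpha> f ys + b * alphaF \<alpha> g ys" .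
qed

lemma alphaF_add:
  "f \<in> freesp n \<Longrightarrow> g \<in> freesp n \<Longrightarrow> alphaF \<alpha> (\<lambda>y. f y + g y) = (\<lambda>ys. alphaF \<alpha> f ys + alphaF \<alpha> g ys)"
  using alphaF_lincomb[of f g 1 1] by simp

lemma alphaF_scale: "f \<in> freesp n \<Longrightarrow> alphaF \<alpha> (\<lambda>y. c * f y) = (\<lambda>ys. c * alphaF \<alpha> f ys)"
  using alphaF_lincomb[of f f c 0] by simp

lemma alphaF_diff:
  "f \<in> freesp n \<Longrightarrow> g \<in> freesp n \<Longrightarrow> alphaF \<alpha> (\<lambda>y. f y - g y) = (\<lambda>ys. alphaF \<alpha> f ys - alphaF \<alpha> g ys)"
  using alphaF_lincomb[of f g 1 "-1"] by simp

lemma alphaF_zero: "alphaF \<alpha> (\<lambda>y. 0) = (\<lambda>y. 0)"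
  unfolding alphaF_def by simp

lemma alphaF_tens: "alphaF \<alpha> (tens xs) = tens (map \<alpha> xs)"
proof
  fix ys
  have "alphaF \<alpha> (tens xs) ys = (\<Sum>x\<in>{x\<in>{xs}. map \<alpha> x = ys}. tens xs x)"
    by (rule alphaF_eq_sum) (auto simp: tens_def)
  also have "\<dots> = (\<Sum>x\<in>(if map \<alpha> xs = ys then {xs} else {}). tens xs x)"
    by (rule sum.cong) auto
  also have "\<dots> = tens (map \<alpha> xs) ys"
    by (simp add: tens_def)
  finally show "alphaF \<alpha> (tens xs) ys = tens (map \<alpha> xs) ys" .
qed

lemma alphaF_sum:
  "finite I \<Longrightarrow> (\<And>i. i \<in> I \<Longrightarrow> f i \<in> freesp n) \<Longrightarrow>
     alphaF \<alpha> (\<lambda>y. \<Sum>i\<in>I. f i y) = (\<lambda>ys. \<Sum>i\<in>I. alphaF \<alpha> (f i) ys)"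
proof (induction I rule: finite_induct)
  case (insert x F)
  then show ?case using alphaF_add[of "f x" "\<lambda>y. \<Sum>i\<in>F. f i y"] freesp_sum[of F f] by simp
qed (simp add: alphaF_zero)

lemma alphaF_delta2:
  assumes xs: "length xs = n" and zs: "length zs = n - 1"
  shows "alphaF \<alpha> (\<lambda>y. tens (br xs # map \<alpha> zs) y - (\<Sum>i<n. tens ((map \<alpha> xs)[i := br (xs ! i # zs)]) y))
    = (\<lambda>y. tens (br (map \<alpha> xs) # map \<alpha> (map \<alpha> zs)) y
          - (\<Sum>i<n. tens ((map \<alpha> (map \<alpha> xs))[i := br (map \<alpha> xs ! i # map \<alpha> zs)]) y))"
proof -
  have summand: "alphaF \<alpha> (tens ((map \<alpha> xs)[i := br (xs ! i # zs)]))
      = tens ((map \<alpha> (map \<alpha> xs))[i := br (map \<alpha> xs ! i # map \<alpha> zs)])" if "i < n" for i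
    using that xs zs alpha_br[of "xs ! i # zs"] two_le_n by (simp add: alphaF_tens map_update)
  have "alphaF \<alpha> (\<lambda>y. \<Sum>i<n. tens ((map \<alpha> xs)[i := br (xs ! i # zs)]) y)
      = (\<lambda>y. \<Sum>i<n. alphaF \<alpha> (tens ((map \<alpha> xs)[i := br (xs ! i # zs)])) y)"
    using xs by (intro alphaF_sum) (auto intro: freesp_tens)
  also have "\<dots> = (\<lambda>y. \<Sum>i<n. tens ((map \<alpha> (map \<alpha> xs))[i := br (map \<alpha> xs ! i # map \<alpha> zs)]) y)"
    by (intro ext sum.cong refl) (simp add: summand)
  finally have sum: "alphaF \<alpha> (\<lambda>y. \<Sum>i<n. tens ((map \<alpha> xs)[i := br (xs ! i # zs)]) y)
      = (\<lambda>y. \<Sum>i<n. tens ((map \<alpha> (map \<alpha> xs))[i := br (map \<alpha> xs ! i # map \<alpha> zs)]) y)" .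
  have head: "alphaF \<alpha> (tens (br xs # map \<alpha> zs)) = tens (br (map \<alpha> xs) # map \<alpha> (map \<alpha> zs))"
    using xs by (simp add: alphaF_tens alpha_br del: map_map)
  have head_freesp: "tens (br xs # map \<alpha> zs) \<in> freesp n"
    using zs two_le_n by (intro freesp_tens) simp
  have sum_freesp: "(\<lambda>y. \<Sum>i<n. tens ((map \<alpha> xs)[i := br (xs ! i # zs)]) y) \<in> freesp n"
    using xs by (intro freesp_sum) (auto intro: freesp_tens)
  from alphaF_diff[OF head_freesp sum_freesp] show ?thesis
    unfolding head sum .
qed

lemma alphaF_rels: "r \<in> Rel \<Longrightarrow> alphaF \<alpha> r \<in> Rel"
proof (induction rule: rels.induct)
  case (add_rel xs i a b)
  then show ?case
    using rels.add_rel[of "map \<alpha> xs" n i "\<alpha> a" "\<alpha> b" scale br \<alpha>]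
    by (simp add: alphaF_diff freesp_diff freesp_tens alphaF_tens map_update A.add)
next
  case (smul_rel xs i c a)
  then show ?case
    using rels.smul_rel[of "map \<alpha> xs" n i scale c "\<alpha> a" br \<alpha>]
    by (simp add: alphaF_diff freesp_tens freesp_scale alphaF_scale alphaF_tens map_update A.scale)
next
  case (delta2_rel xs zs)
  then show ?case
    using rels.delta2_rel[of "map \<alpha> xs" n "map \<alpha> zs" br \<alpha> scale] by (simp add: alphaF_delta2)
qed (simp_all add: alphaF_zero alphaF_add alphaF_scale rels_subset_freesp zero_rel plus_rel scal_rel)

lemma mem_ucls_iff: "g \<in> cl f \<longleftrightarrow> (\<lambda>y. g y - f y) \<in> Rel"
proof
  assume "g \<in> cl f"
  then obtain r where "r \<in> Rel" "g = (\<lambda>y. f y + r y)" unfolding ucls_def by auto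
  then show "(\<lambda>y. g y - f y) \<in> Rel" by (simp add: rels_cong)
next
  assume "(\<lambda>y. g y - f y) \<in> Rel"
  then show "g \<in> cl f" unfolding ucls_def by (intro CollectI exI[of _ "\<lambda>y. g y - f y"]) auto
qed

lemma ucls_self: "f \<in> cl f"
  by (simp add: mem_ucls_iff zero_rel)

lemma ucls_eq_iff: "cl f = cl g \<longleftrightarrow> (\<lambda>y. f y - g y) \<in> Rel"
proof
  assume "cl f = cl g"
  then show "(\<lambda>y. f y - g y) \<in> Rel" using ucls_self[of f] by (simp add: mem_ucls_iff)
next
  assume d: "(\<lambda>y. f y - g y) \<in> Rel"
  have "(\<lambda>y. h y - f y) \<in> Rel \<longleftrightarrow> (\<lambda>y. h y - g y) \<in> Rel" for h
  proof
    assume "(\<lambda>y. h y - f y) \<in> Rel"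
    from plus_rel[OF this d] show "(\<lambda>y. h y - g y) \<in> Rel" by (rule rels_cong) simp
  next
    assume "(\<lambda>y. h y - g y) \<in> Rel"
    from rels_diff[OF this d] show "(\<lambda>y. h y - f y) \<in> Rel" by (rule rels_cong) simp
  qed
  then show "cl f = cl g" by (auto simp: mem_ucls_iff)
qed

lemma ucls_zero: "cl (\<lambda>y. 0) = Rel"
  by (rule set_eqI) (simp add: mem_ucls_iff)

lemma ucls_eq_rels_iff: "cl f = Rel \<longleftrightarrow> f \<in> Rel"
  using ucls_eq_iff[of f "\<lambda>y. 0"] by (simp add: ucls_zero)

lemma uce_add_ucls: "uce_add (cl f) (cl g) = cl (\<lambda>y. f y + g y)"
proof (rule set_eqI)
  fix h
  show "h \<in> uce_add (cl f) (cl g) \<longleftrightarrow> h \<in> cl (\<lambda>y. f y + g y)"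
  proof
    assume "h \<in> uce_add (cl f) (cl g)"
    then obtain c d where "c \<in> cl f" "d \<in> cl g" "h = (\<lambda>y. c y + d y)"
      unfolding uce_add_def by auto
    then show "h \<in> cl (\<lambda>y. f y + g y)"
      unfolding mem_ucls_iff by (auto intro: rels_cong[OF plus_rel])
  next
    assume "h \<in> cl (\<lambda>y. f y + g y)"
    then have "(\<lambda>y. h y - g y) \<in> cl f" by (simp add: mem_ucls_iff algebra_simps)
    with ucls_self[of g] show "h \<in> uce_add (cl f) (cl g)"
      unfolding uce_add_def by (intro CollectI exI[of _ "\<lambda>y. h y - g y"] exI[of _ g]) auto
  qed
qed

lemma uce_smul_ucls: "uce_smul n scale br \<alpha> c (cl f) = cl (\<lambda>y. c * f y)"
proof (rule set_eqI)
  fix h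
  show "h \<in> uce_smul n scale br \<alpha> c (cl f) \<longleftrightarrow> h \<in> cl (\<lambda>y. c * f y)"
  proof
    assume "h \<in> uce_smul n scale br \<alpha> c (cl f)"
    then obtain g r where g: "g \<in> cl f" and r: "r \<in> Rel" and h: "h = (\<lambda>y. c * g y + r y)"
      unfolding uce_smul_def by auto
    from g have "(\<lambda>y. g y - f y) \<in> Rel" by (simp add: mem_ucls_iff)
    from plus_rel[OF scal_rel[OF this, of c] r]
    show "h \<in> cl (\<lambda>y. c * f y)"
      unfolding mem_ucls_iff h by (rule rels_cong) (simp add: algebra_simps)
  next
    assume "h \<in> cl (\<lambda>y. c * f y)"
    with ucls_self[of f] show "h \<in> uce_smul n scale br \<alpha> c (cl f)"
      unfolding uce_smul_def mem_ucls_iff by (intro CollectI exI[of _ f] exI[of _ "\<lambda>y. h y - c * f y"]) auto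
  qed
qed

lemma uL_ucls:
  assumes f: "f \<in> freesp n"
  shows "uL scale br (cl f) = uF scale br f"
proof -
  define g where "g = (SOME g. g \<in> cl f)"
  have "g \<in> cl f" unfolding g_def by (rule someI[of "\<lambda>g. g \<in> cl f", OF ucls_self])
  then have d: "(\<lambda>y. g y - f y) \<in> Rel" by (simp add: mem_ucls_iff)
  have "uF scale br g = uF scale br (\<lambda>y. f y + (g y - f y))" by simp
  also have "\<dots> = uF scale br f"
    using uF_add[OF f rels_subset_freesp[OF d]] uF_rels[OF d] by simp
  finally show ?thesis unfolding uL_def g_def .
qed

lemma alpha_uce_ucls:
  assumes f: "f \<in> freesp n"
  shows "alpha_uce n scale br \<alpha> (cl f) = cl (alphaF \<alpha> f)"
proof (rule set_eqI)
  fix h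
  show "h \<in> alpha_uce n scale br \<alpha> (cl f) \<longleftrightarrow> h \<in> cl (alphaF \<alpha> f)"
  proof
    assume "h \<in> alpha_uce n scale br \<alpha> (cl f)"
    then obtain g r where g: "g \<in> cl f" and r: "r \<in> Rel" and h: "h = (\<lambda>y. alphaF \<alpha> g y + r y)"
      unfolding alpha_uce_def by auto
    from g have d: "(\<lambda>y. g y - f y) \<in> Rel" by (simp add: mem_ucls_iff)
    have "alphaF \<alpha> g = alphaF \<alpha> (\<lambda>y. f y + (g y - f y))" by simp
    also have "\<dots> = (\<lambda>y. alphaF \<alpha> f y + alphaF \<alpha> (\<lambda>y. g y - f y) y)"
      by (rule alphaF_add[OF f rels_subset_freesp[OF d]])
    finally have "(\<lambda>y. h y - alphaF \<alpha> f y) = (\<lambda>y. alphaF \<alpha> (\<lambda>y. g y - f y) y + r y)"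
      unfolding h by auto
    with plus_rel[OF alphaF_rels[OF d] r] show "h \<in> cl (alphaF \<alpha> f)" by (simp add: mem_ucls_iff)
  next
    assume "h \<in> cl (alphaF \<alpha> f)"
    with ucls_self[of f] show "h \<in> alpha_uce n scale br \<alpha> (cl f)"
      unfolding alpha_uce_def mem_ucls_iff
      by (intro CollectI exI[of _ f] exI[of _ "\<lambda>y. h y - alphaF \<alpha> f y"]) auto
  qed
qed

lemma uF_alphaF:
  assumes f: "f \<in> freesp n"
  shows "uF scale br (alphaF \<alpha> f) = \<alpha> (uF scale br f)"
proof -
  let ?S = "{xs. f xs \<noteq> 0}"
  let ?T = "\<lambda>ys. {xs\<in>?S. map \<alpha> xs = ys}"
  have fin: "finite ?S" using f by (rule freesp_finite_support)
  have "uF scale br (alphaF \<alpha> f) = (\<Sum>ys\<in>map \<alpha> ` ?S. scale (alphaF \<alpha> f ys) (br ys))"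
    by (rule uF_eq_sum) (use fin in \<open>auto dest: alphaF_nonzeroD\<close>)
  also have "\<dots> = (\<Sum>ys\<in>map \<alpha> ` ?S. \<Sum>xs\<in>?T ys. scale (f xs) (br (map \<alpha> xs)))"
  proof (rule sum.cong[OF refl])
    fix ys
    have "scale (alphaF \<alpha> f ys) (br ys) = (\<Sum>xs\<in>?T ys. scale (f xs) (br ys))"
      unfolding alphaF_eq_sum[OF fin order_refl] by (rule V.scale_sum_left)
    then show "scale (alphaF \<alpha> f ys) (br ys) = (\<Sum>xs\<in>?T ys. scale (f xs) (br (map \<alpha> xs)))"
      by simp
  qed
  also have "\<dots> = (\<Sum>xs\<in>?S. scale (f xs) (br (map \<alpha> xs)))"
    by (rule sum.group) (use fin in auto)
  also have "\<dots> = (\<Sum>xs\<in>?S. \<alpha> (scale (f xs) (br xs)))"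
    using f unfolding freesp_def by (auto simp: A.scale alpha_br intro!: sum.cong)
  also have "\<dots> = \<alpha> (uF scale br f)"
    unfolding uF_def by (simp add: A.sum)
  finally show ?thesis .
qed

abbreviation im_uce where "im_uce \<equiv> alpha_uce n scale br \<alpha> ` uce n scale br \<alpha>"

lemma im_uce_eq: "im_uce = (\<lambda>f. cl (alphaF \<alpha> f)) ` freesp n"
  unfolding uce_def image_comp by (rule image_cong[OF refl]) (simp add: alpha_uce_ucls)

lemma uL_ucls_alphaF: "f \<in> freesp n \<Longrightarrow> uL scale br (cl (alphaF \<alpha> f)) = \<alpha> (uF scale br f)"
  by (simp add: uL_ucls freesp_alphaF uF_alphaF)

lemma uL_im_uce: "w \<in> im_uce \<Longrightarrow> uL scale br w \<in> range \<alpha>"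
  unfolding im_uce_eq by (auto simp: uL_ucls_alphaF)

lemma uL_uce_add:
  "v \<in> im_uce \<Longrightarrow> w \<in> im_uce \<Longrightarrow> uL scale br (uce_add v w) = uL scale br v + uL scale br w"
  unfolding im_uce_eq
  by (auto simp: uce_add_ucls uL_ucls freesp_add freesp_alphaF uF_add)

lemma uL_uce_smul:
  "w \<in> im_uce \<Longrightarrow> uL scale br (uce_smul n scale br \<alpha> c w) = scale c (uL scale br w)"
  unfolding im_uce_eq
  by (auto simp: uce_smul_ucls uL_ucls freesp_scale freesp_alphaF uF_scale)

lemma uL_br_uce:
  "length ws = n \<Longrightarrow> uL scale br (br_uce n scale br \<alpha> ws) = br (map (uL scale br) ws)"
  unfolding br_uce_def by (simp add: uL_ucls freesp_tens uF_tens)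

lemma rels_in_im_uce: "Rel \<in> im_uce"
  using freesp_zero unfolding im_uce_eq by (force simp: alphaF_zero ucls_zero)

lemma uL_rels: "uL scale br Rel = 0"
  using uL_ucls[OF freesp_zero] by (simp add: ucls_zero uF_zero)

abbreviation Z_L where "Z_L \<equiv> centre n (range \<alpha>) br 0"
abbreviation Z_uce where "Z_uce \<equiv> centre n im_uce (br_uce n scale br \<alpha>) Rel"

lemma mem_Z_L_iff:
  "x \<in> Z_L \<longleftrightarrow> x \<in> range \<alpha> \<and> (\<forall>ys i. set ys \<subseteq> range \<alpha> \<and> length ys = n - 1 \<and> i \<le> n - 1 \<longrightarrow>
                          br (take i ys @ x # drop i ys) = 0)"
  unfolding centre_def by blast

lemma br_insert_linear:
  assumes "length ys = n - 1" "i \<le> n - 1"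
  shows "br (take i ys @ 0 # drop i ys) = 0"
    and "br (take i ys @ (x + y) # drop i ys)
      = br (take i ys @ x # drop i ys) + br (take i ys @ y # drop i ys)"
    and "br (take i ys @ scale c x # drop i ys) = scale c (br (take i ys @ x # drop i ys))"
proof -
  let ?l = "take i ys @ 0 # drop i ys"
  have l: "length ?l = n" "i < n" using assms two_le_n by auto
  have "br (take i ys @ x # drop i ys) = br (?l[i := x])" for x
    using assms by (simp add: list_update_insert_at)
  then show "br (take i ys @ 0 # drop i ys) = 0"
    and "br (take i ys @ (x + y) # drop i ys)
      = br (take i ys @ x # drop i ys) + br (take i ys @ y # drop i ys)"
    and "br (take i ys @ scale c x # drop i ys) = scale c (br (take i ys @ x # drop i ys))"
    using br_zero_entry[OF l] br_add_entry[OF l] br_scale_entry[OF l] by simp_all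
qed

lemma subspace_range_alpha: "V.subspace (range \<alpha>)"
  by (rule A.subspace_image[OF V.subspace_UNIV])

lemma subspace_Z_L: "V.subspace Z_L"
proof -
  note range = subspace_range_alpha
  show ?thesis unfolding V.subspace_def
  proof (intro conjI ballI allI)
    show "0 \<in> Z_L"
      using V.subspace_0[OF range] by (auto simp: mem_Z_L_iff br_insert_linear)
  next
    fix x y assume "x \<in> Z_L" "y \<in> Z_L"
    then show "x + y \<in> Z_L"
      using V.subspace_add[OF range] by (auto simp: mem_Z_L_iff br_insert_linear)
  next
    fix c x assume "x \<in> Z_L"
    then show "scale c x \<in> Z_L"
      using V.subspace_scale[OF range] by (auto simp: mem_Z_L_iff br_insert_linear)
  qed
qed

end

locale perfect_hom_leibniz = hom_leibniz n scale br \<alpha>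
  for n and scale :: "'k::field \<Rightarrow> 'v::ab_group_add \<Rightarrow> 'v" and br \<alpha> +
  assumes perfect: "perfect n scale br" and inj_alpha: "inj \<alpha>"
begin

lemma ex_freesp_uF_eq: "\<exists>f\<in>freesp n. uF scale br f = v"
proof -
  let ?P = "{v. \<exists>f\<in>freesp n. uF scale br f = v}"
  have "V.subspace ?P" unfolding V.subspace_def
  proof (intro conjI ballI allI)
    show "0 \<in> ?P" using freesp_zero uF_zero by auto
  next
    fix x y assume "x \<in> ?P" "y \<in> ?P"
    then obtain f g where "f \<in> freesp n" "g \<in> freesp n" "x = uF scale br f" "y = uF scale br g"
      by blast
    then show "x + y \<in> ?P" by (auto intro!: bexI[of _ "\<lambda>y. f y + g y"] freesp_add simp: uF_add)
  next
    fix c x assume "x \<in> ?P"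
    then obtain f where "f \<in> freesp n" "x = uF scale br f" by blast
    then show "scale c x \<in> ?P" by (auto intro!: bexI[of _ "\<lambda>y. c * f y"] freesp_scale simp: uF_scale)
  qed
  moreover have "{br xs | xs. length xs = n} \<subseteq> ?P"
    using freesp_tens uF_tens by blast
  ultimately have "V.span {br xs | xs. length xs = n} \<subseteq> ?P"
    by (rule V.span_minimal[rotated])
  with perfect show ?thesis unfolding perfect_def by auto
qed

lemma uL_image_im_uce: "uL scale br ` im_uce = range \<alpha>"
proof (intro equalityI subsetI)
  fix a assume "a \<in> range \<alpha>"
  then obtain v where "a = \<alpha> v" by blast
  moreover obtain f where f: "f \<in> freesp n" "uF scale br f = v" using ex_freesp_uF_eq by blast
  ultimately have "a = uL scale br (cl (alphaF \<alpha> f))" by (simp add: uL_ucls_alphaF)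
  moreover have "cl (alphaF \<alpha> f) \<in> im_uce" unfolding im_uce_eq using f by blast
  ultimately show "a \<in> uL scale br ` im_uce" by blast
qed (auto intro: uL_im_uce)

lemma ex_im_uce_uL_eq: "a \<in> range \<alpha> \<Longrightarrow> \<exists>w\<in>im_uce. uL scale br w = a"
  using uL_image_im_uce by (metis imageE)

lemma tens_entry_rels_of_brackets:
  assumes l: "length l = n" "j < n"
    and brackets: "\<And>xs. length xs = n \<Longrightarrow> tens (l[j := br xs]) \<in> Rel"
  shows "tens (l[j := a]) \<in> Rel"
proof -
  have "V.span {br xs | xs. length xs = n} \<subseteq> {a. tens (l[j := a]) \<in> Rel}"
    using brackets by (intro V.span_minimal subspace_tens_entry_rels[OF l]) auto
  with perfect show ?thesis unfolding perfect_def by auto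
qed

lemma tens_cons_rels_if_annihilates:
  assumes rest: "set rest \<subseteq> range \<alpha>" "length rest = n - 1"
    and annihilates: "\<And>c. c \<in> range \<alpha> \<Longrightarrow> br (c # rest) = 0"
  shows "tens (a # rest) \<in> Rel"
proof -
  have l: "length (a # rest) = n" "0 < n" using rest two_le_n by auto
  have "tens ((a # rest)[0 := a']) \<in> Rel" for a'
  proof (rule tens_entry_rels_of_brackets[OF l])
    fix xs :: "'v list" assume xs: "length xs = n"
    obtain zs where zs: "map \<alpha> zs = rest" using ex_list_map_eq[of "range \<alpha>" UNIV \<alpha> rest] rest by auto
    then have lz: "length zs = n - 1" using rest by auto
    have "br (xs ! i # zs) = 0" if "i < n" for i
    proof -
      have "\<alpha> (br (xs ! i # zs)) = br (\<alpha> (xs ! i) # rest)"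
        using alpha_br[of "xs ! i # zs"] lz zs two_le_n by simp
      also have "\<dots> = \<alpha> 0" using annihilates by simp
      finally show ?thesis by (rule injD[OF inj_alpha])
    qed
    then have "(\<lambda>y. \<Sum>i<n. tens ((map \<alpha> xs)[i := br (xs ! i # zs)]) y) \<in> Rel"
      by (intro rels_sum) (auto simp: xs tens_zero_entry_rels)
    from plus_rel[OF delta2_rel[OF xs lz] this]
    show "tens ((a # rest)[0 := br xs]) \<in> Rel" by (rule rels_cong) (simp add: zs)
  qed
  from this[of a] show ?thesis by simp
qed

lemma tens_Z_L_entry_rels_nonhead:
  assumes x: "x \<in> Z_L" and as: "set as \<subseteq> range \<alpha>" "length as = n - 1"
    and i: "1 \<le> i" "i \<le> n - 1"
  shows "tens (take i as @ x # drop i as) \<in> Rel"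
proof -
  obtain a0 as' where as_eq: "as = a0 # as'" using as two_le_n by (cases as) auto
  let ?rest = "take (i - 1) as' @ x # drop (i - 1) as'"
  have insert_eq: "take i (c # as') @ x # drop i (c # as') = c # ?rest" for c
    using i by (cases i) auto
  have "tens (a0 # ?rest) \<in> Rel"
  proof (rule tens_cons_rels_if_annihilates)
    show "set ?rest \<subseteq> range \<alpha>" "length ?rest = n - 1"
      using x as as_eq i unfolding mem_Z_L_iff by (auto dest: in_set_takeD in_set_dropD)
    fix c assume "c \<in> range \<alpha>"
    then have "br (take i (c # as') @ x # drop i (c # as')) = 0"
      using x as as_eq i unfolding mem_Z_L_iff by auto
    then show "br (c # ?rest) = 0" by (simp only: insert_eq)
  qed
  then show ?thesis by (simp only: as_eq insert_eq)
qed

lemma condC_uce_imp_tens_square_rels: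
  assumes CU: "condC n (uce n scale br \<alpha>) (br_uce n scale br \<alpha>) (alpha_uce n scale br \<alpha>) Rel"
    and a: "a \<in> range \<alpha>" and cs: "set cs \<subseteq> range \<alpha>" "length cs = n - 2"
  shows "tens (a # a # cs) \<in> Rel"
proof -
  let ?u = "\<lambda>k. uL scale br (alpha_uce n scale br \<alpha> k)"
  have onto: "\<exists>k\<in>uce n scale br \<alpha>. ?u k = b" if "b \<in> range \<alpha>" for b
    using ex_im_uce_uL_eq[OF that] by blast
  obtain k where k: "k \<in> uce n scale br \<alpha>" "?u k = a" using onto[OF a] by blast
  obtain ks where ks: "set ks \<subseteq> uce n scale br \<alpha>" "map ?u ks = cs"
    using ex_list_map_eq[OF onto cs(1)] by blast
  then have "length ks = n - 2" using cs by auto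
  with CU k ks have "br_uce n scale br \<alpha> (alpha_uce n scale br \<alpha> k # alpha_uce n scale br \<alpha> k
      # map (alpha_uce n scale br \<alpha>) ks) = Rel"
    unfolding condC_def by blast
  then have "cl (tens (a # a # cs)) = Rel"
    unfolding br_uce_def using k ks by (simp add: comp_def)
  then show ?thesis by (simp add: ucls_eq_rels_iff)
qed

context
  assumes tens_square_rels:
    "\<And>a cs. a \<in> range \<alpha> \<Longrightarrow> set cs \<subseteq> range \<alpha> \<Longrightarrow> length cs = n - 2 \<Longrightarrow> tens (a # a # cs) \<in> Rel"
begin

lemma tens_swap_rels:
  assumes a: "a \<in> range \<alpha>" and b: "b \<in> range \<alpha>" and cs: "set cs \<subseteq> range \<alpha>" "length cs = n - 2"
  shows "(\<lambda>y. tens (a # b # cs) y + tens (b # a # cs) y) \<in> Rel"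
proof -
  have len: "length ((a + b) # (a + b) # cs) = n" "1 < n" using cs two_le_n by auto
  have e0: "(\<lambda>y. tens ((a + b) # (a + b) # cs) y
      - (tens (a # (a + b) # cs) y + tens (b # (a + b) # cs) y)) \<in> Rel"
    using tens_add_entry_rels[of "(a + b) # (a + b) # cs" 0 a b] len by simp
  have e1: "(\<lambda>y. tens (c # (a + b) # cs) y - (tens (c # a # cs) y + tens (c # b # cs) y)) \<in> Rel" for c
    using tens_add_entry_rels[of "c # (a + b) # cs" 1 a b] len by (simp add: numeral_eq_Suc)
  have "a + b \<in> range \<alpha>" using a b by (rule V.subspace_add[OF subspace_range_alpha])
  from tens_square_rels[OF this cs] tens_square_rels[OF a cs] tens_square_rels[OF b cs]
  have "(\<lambda>y. tens ((a + b) # (a + b) # cs) y - tens (a # a # cs) y - tens (b # b # cs) y) \<in> Rel"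
    by (intro rels_diff)
  from rels_diff[OF rels_diff[OF rels_diff[OF this e0] e1[of a]] e1[of b]]
  show ?thesis by (rule rels_cong) (simp add: algebra_simps)
qed

lemma tens_Z_L_entry_rels:
  assumes x: "x \<in> Z_L" and as: "set as \<subseteq> range \<alpha>" "length as = n - 1" and i: "i \<le> n - 1"
  shows "tens (take i as @ x # drop i as) \<in> Rel"
proof (cases "i = 0")
  case True
  obtain a1 cs where as_eq: "as = a1 # cs" using as two_le_n by (cases as) auto
  have "(\<lambda>y. tens (x # a1 # cs) y + tens (a1 # x # cs) y) \<in> Rel"
    using x as as_eq unfolding mem_Z_L_iff by (intro tens_swap_rels) auto
  moreover have "tens (a1 # x # cs) \<in> Rel"
    using tens_Z_L_entry_rels_nonhead[OF x as, of 1] two_le_n as_eq by simp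
  ultimately have "tens (x # as) \<in> Rel"
    unfolding as_eq by (rule rels_cong[OF rels_diff]) simp
  with True show ?thesis by simp
next
  case False
  with tens_Z_L_entry_rels_nonhead[OF x as _ i] show ?thesis by simp
qed

lemma mem_Z_uce_iff:
  assumes w: "w \<in> im_uce"
  shows "w \<in> Z_uce \<longleftrightarrow> uL scale br w \<in> Z_L"
proof -
  let ?ins = "\<lambda>i as. take i as @ uL scale br w # drop i as"
  have br_uce_ins: "br_uce n scale br \<alpha> (take i ys @ w # drop i ys) = Rel \<longleftrightarrow>
      tens (?ins i (map (uL scale br) ys)) \<in> Rel" for ys i
    unfolding br_uce_def ucls_eq_rels_iff by (simp only: map_append list.map take_map drop_map)
  have "w \<in> Z_uce \<longleftrightarrow> (\<forall>ys i. set ys \<subseteq> im_uce \<and> length ys = n - 1 \<and> i \<le> n - 1 \<longrightarrow>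
      tens (?ins i (map (uL scale br) ys)) \<in> Rel)"
    using w unfolding centre_def mem_Collect_eq br_uce_ins by (simp only: simp_thms)
  also have "\<dots> \<longleftrightarrow> (\<forall>as i. set as \<subseteq> range \<alpha> \<and> length as = n - 1 \<and> i \<le> n - 1 \<longrightarrow>
      tens (?ins i as) \<in> Rel)"
  proof (intro iffI allI impI)
    fix as i assume H: "\<forall>ys i. set ys \<subseteq> im_uce \<and> length ys = n - 1 \<and> i \<le> n - 1 \<longrightarrow>
      tens (?ins i (map (uL scale br) ys)) \<in> Rel"
      and as: "set as \<subseteq> range \<alpha> \<and> length as = n - 1 \<and> i \<le> n - 1"
    obtain ys where "set ys \<subseteq> im_uce" "map (uL scale br) ys = as"
      using ex_list_map_eq[OF ex_im_uce_uL_eq] as by blast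
    with H as show "tens (?ins i as) \<in> Rel" by auto
  next
    fix ys i assume H: "\<forall>as i. set as \<subseteq> range \<alpha> \<and> length as = n - 1 \<and> i \<le> n - 1 \<longrightarrow>
      tens (?ins i as) \<in> Rel"
      and ys: "set ys \<subseteq> im_uce \<and> length ys = n - 1 \<and> i \<le> n - 1"
    then have "set (map (uL scale br) ys) \<subseteq> range \<alpha>" using uL_im_uce by auto
    with ys show "tens (?ins i (map (uL scale br) ys)) \<in> Rel" using H[rule_format, of "map (uL scale br) ys" i] by simp
  qed
  also have "\<dots> \<longleftrightarrow> uL scale br w \<in> Z_L"
  proof
    assume "\<forall>as i. set as \<subseteq> range \<alpha> \<and> length as = n - 1 \<and> i \<le> n - 1 \<longrightarrow> tens (?ins i as) \<in> Rel"
    then have "br (?ins i as) = 0" if "set as \<subseteq> range \<alpha>" "length as = n - 1" "i \<le> n - 1" for as i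
      using that uF_rels uF_tens by metis
    with uL_im_uce[OF w] show "uL scale br w \<in> Z_L" unfolding mem_Z_L_iff by blast
  qed (use tens_Z_L_entry_rels in blast)
  finally show ?thesis .
qed

lemma Z_uce_subset_im_uce: "z \<in> Z_uce \<Longrightarrow> z \<in> im_uce"
  unfolding centre_def by blast

lemma cls_Z_uce_subset:
  assumes v: "v \<in> im_uce" and w: "w \<in> im_uce" and d: "uL scale br v - uL scale br w \<in> Z_L"
  shows "cls uce_add Z_uce v \<subseteq> cls uce_add Z_uce w"
proof
  fix x assume "x \<in> cls uce_add Z_uce v"
  then obtain z where z: "z \<in> Z_uce" and x: "x = uce_add v z" unfolding cls_def by auto
  obtain f g h where fgh: "f \<in> freesp n" "g \<in> freesp n" "h \<in> freesp n"
    and "v = cl (alphaF \<alpha> f)" "w = cl (alphaF \<alpha> g)" "z = cl (alphaF \<alpha> h)"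
    using v w Z_uce_subset_im_uce[OF z] unfolding im_uce_eq by auto
  note vwz = this(4-6)
  define h' where "h' = (\<lambda>y. f y - g y + h y)"
  have h': "h' \<in> freesp n" unfolding h'_def using fgh by (intro freesp_add freesp_diff)
  let ?z' = "cl (alphaF \<alpha> h')"
  have "uL scale br ?z' = \<alpha> (uF scale br h')" by (rule uL_ucls_alphaF[OF h'])
  also have "\<dots> = \<alpha> (uF scale br f) - \<alpha> (uF scale br g) + \<alpha> (uF scale br h)"
    unfolding h'_def using fgh by (simp add: uF_add uF_diff freesp_diff A.add A.diff)
  also have "\<dots> = (uL scale br v - uL scale br w) + uL scale br z"
    unfolding vwz using fgh by (simp add: uL_ucls_alphaF)
  finally have "uL scale br ?z' = (uL scale br v - uL scale br w) + uL scale br z" .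
  moreover have "uL scale br z \<in> Z_L"
    using mem_Z_uce_iff[OF Z_uce_subset_im_uce[OF z]] z by blast
  ultimately have "uL scale br ?z' \<in> Z_L"
    using d by (simp add: V.subspace_add[OF subspace_Z_L])
  moreover have "?z' \<in> im_uce" unfolding im_uce_eq using h' by blast
  ultimately have "?z' \<in> Z_uce" using mem_Z_uce_iff by blast
  moreover have "uce_add w ?z' = uce_add v z"
    unfolding vwz uce_add_ucls h'_def
    using fgh by (simp add: alphaF_add alphaF_diff freesp_diff)
  ultimately show "x \<in> cls uce_add Z_uce w"
    unfolding cls_def x by blast
qed

lemma cls_Z_uce_eq_iff:
  assumes v: "v \<in> im_uce" and w: "w \<in> im_uce"
  shows "cls uce_add Z_uce v = cls uce_add Z_uce w \<longleftrightarrow> uL scale br v - uL scale br w \<in> Z_L"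
proof
  assume eq: "cls uce_add Z_uce v = cls uce_add Z_uce w"
  have "Rel \<in> Z_uce"
    using mem_Z_uce_iff[OF rels_in_im_uce] uL_rels V.subspace_0[OF subspace_Z_L] by simp
  moreover have "v = uce_add v Rel"
    using v unfolding im_uce_eq by (auto simp flip: ucls_zero simp: uce_add_ucls)
  ultimately have "v \<in> cls uce_add Z_uce v" unfolding cls_def by blast
  then have "v \<in> cls uce_add Z_uce w" by (simp only: eq)
  then obtain z where z: "v = uce_add w z" "z \<in> Z_uce" unfolding cls_def by blast
  then have "uL scale br v - uL scale br w = uL scale br z"
    using uL_uce_add[OF w Z_uce_subset_im_uce] by simp
  then show "uL scale br v - uL scale br w \<in> Z_L"
    using mem_Z_uce_iff[OF Z_uce_subset_im_uce] z by simp
next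
  assume d: "uL scale br v - uL scale br w \<in> Z_L"
  then have "uL scale br w - uL scale br v \<in> Z_L"
    using V.subspace_neg[OF subspace_Z_L d] by simp
  with d show "cls uce_add Z_uce v = cls uce_add Z_uce w"
    using cls_Z_uce_subset v w by blast
qed

end

end

theorem theorem5p7:
  fixes n :: nat
    and scale :: "'k::field \<Rightarrow> 'v::ab_group_add \<Rightarrow> 'v"
    and br :: "'v list \<Rightarrow> 'v"
    and \<alpha> :: "'v \<Rightarrow> 'v"
  assumes HL: "hom_leibniz_nalg n scale br \<alpha>"
    and perf: "perfect n scale br"
    and inj: "inj \<alpha>"
    and CL: "condC n UNIV br \<alpha> 0"
    and CU: "condC n (uce n scale br \<alpha>) (br_uce n scale br \<alpha>) (alpha_uce n scale br \<alpha>)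
                (rels n scale br \<alpha>)"
  shows "\<exists>\<phi>. bij_betw \<phi>
           (quot uce_add (alpha_uce n scale br \<alpha> ` uce n scale br \<alpha>)
              (centre n (alpha_uce n scale br \<alpha> ` uce n scale br \<alpha>) (br_uce n scale br \<alpha>)
                 (rels n scale br \<alpha>)))
           (quot (+) (range \<alpha>) (centre n (range \<alpha>) br 0))
         \<and> (\<forall>w \<in> alpha_uce n scale br \<alpha> ` uce n scale br \<alpha>.
              \<phi> (cls uce_add (centre n (alpha_uce n scale br \<alpha> ` uce n scale br \<alpha>) (br_uce n scale br \<alpha>)
                     (rels n scale br \<alpha>)) w)
              = cls (+) (centre n (range \<alpha>) br 0) (uL scale br w))
         \<and> (\<forall>v \<in> alpha_uce n scale br \<alpha> ` uce n scale br \<alpha>. \<forall>w \<in> alpha_uce n scale br \<alpha> ` uce n scale br \<alpha>.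
              uL scale br (uce_add v w) = uL scale br v + uL scale br w)
         \<and> (\<forall>c. \<forall>w \<in> alpha_uce n scale br \<alpha> ` uce n scale br \<alpha>.
              uL scale br (uce_smul n scale br \<alpha> c w) = scale c (uL scale br w))
         \<and> (\<forall>ws. set ws \<subseteq> alpha_uce n scale br \<alpha> ` uce n scale br \<alpha> \<and> length ws = n \<longrightarrow>
              uL scale br (br_uce n scale br \<alpha> ws) = br (map (uL scale br) ws))"
proof -
  interpret perfect_hom_leibniz n scale br \<alpha>
    using HL perf inj by unfold_locales
  note tens_square_rels = condC_uce_imp_tens_square_rels[OF CU]
  note Z_L = subspace_Z_L
  have cls_L_eq_iff: "cls (+) Z_L a = cls (+) Z_L b \<longleftrightarrow> a - b \<in> Z_L" for a b
    by (rule cls_plus_eq_iff[OF V.subspace_0[OF Z_L] V.subspace_add[OF Z_L] V.subspace_neg[OF Z_L]])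
  have "cls uce_add Z_uce v = cls uce_add Z_uce w \<longleftrightarrow>
      cls (+) Z_L (uL scale br v) = cls (+) Z_L (uL scale br w)" if "v \<in> im_uce" "w \<in> im_uce" for v w
    by (simp only: cls_Z_uce_eq_iff[OF tens_square_rels that] cls_L_eq_iff)
  from bij_betw_classes[where f = "cls uce_add Z_uce" and g = "cls (+) Z_L", OF uL_image_im_uce this]
  obtain \<phi>
    where bij: "bij_betw \<phi> (cls uce_add Z_uce ` im_uce) (cls (+) Z_L ` range \<alpha>)"
      and \<phi>: "\<forall>w\<in>im_uce. \<phi> (cls uce_add Z_uce w) = cls (+) Z_L (uL scale br w)"
    by blast
  show ?thesis
    unfolding quot_def by (intro exI[of _ \<phi>] conjI bij \<phi>) (simp_all add: uL_uce_add uL_uce_smul uL_br_uce)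
qed

end
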